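(* Let $(u^k)$ be the iteration sequence defined by Algorithm 2 below, and suppose that at step $k$ one has $\delta^k>0$. Then $\lambda(u^{k+1})>\lambda(u^k)$.
   Context: $T,G:\mathbb{R}^n\to\mathbb{R}^n$ are continuously differentiable; $S\subset\mathbb{R}^n$ is open with $\langle G(u),\psi\rangle>0$ for all $u\in S$ and all nonzero $\psi$ with nonnegative entries. For $u\in S$: $f_i(u)=T_i(u)/G_i(u)$, $\lambda(u)=\min_i f_i(u)$, $N_\varepsilon(u)=\{i: f_i(u)-\lambda(u)<\varepsilon\}$. For $M=\{i_1<\dots<i_m\}$, $\mathcal{A}_M(u)$ is the $n\times m$ matrix with columns $\nabla f_{i_1}(u),\dots,\nabla f_{i_m}(u)$ and $\Gamma_M(u)=\mathcal{A}_M(u)^T\mathcal{A}_M(u)$. Algorithm 2 (parameters $\varepsilon,\delta>0$, start $u_0\in S$): for $k=0,1,2,\dots$: compute $\lambda(u^k)$ and $N_\varepsilon(u^k)=\{i_1<\dots<i_N\}$; solve the linear system $\Gamma_{N_\varepsilon(u^k)}(u^k)\alpha^k=\delta^k(1,\dots,1)^T$, $\sum_{j=1}^N\alpha^k_j=1$ for $(\alpha^k,\delta^k)\in\mathbb{R}^N\times\mathbb{R}$; if $\delta^k<\delta$ and $N=n$, stop; otherwise set $Y^k=\sum_{j=1}^N\alpha^k_j\nabla f_{i_j}(u^k)$, $y^k=Y^k/\|Y^k\|$, take the step length $\tau^k\ge0$ to be a maximizer (computed by golden section search) of $\kappa(\tau)=\lambda(u^k+\tau y^k)$ over $\tau\ge0$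 with $u^k+\tau y^k\in S$, and set $u^{k+1}=u^k+\tau^ky^k$. *)

theory Defs
  imports "HOL-Analysis.Analysis"
begin

text \<open>Vectors of R^n are rendered as real^'n (n = CARD('n)); indices i range over the finite type 'n.\<close>

definition grad :: "(real^'n \<Rightarrow> real) \<Rightarrow> real^'n \<Rightarrow> real^'n" where
  "grad \<phi> u = (\<chi> j. frechet_derivative \<phi> (at u) (axis j 1))"

definition fq :: "(real^'n \<Rightarrow> real^'n) \<Rightarrow> (real^'n \<Rightarrow> real^'n) \<Rightarrow> 'n \<Rightarrow> real^'n \<Rightarrow> real" where
  "fq T G i u = T u $ i / G u $ i"

definition lam :: "(real^'n \<Rightarrow> real^'n) \<Rightarrow> (real^'n \<Rightarrow> real^'n) \<Rightarrow> real^'n \<Rightarrow> real" where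
  "lam T G u = Min (range (\<lambda>i. fq T G i u))"

definition Neps :: "(real^'n \<Rightarrow> real^'n) \<Rightarrow> (real^'n \<Rightarrow> real^'n) \<Rightarrow> real \<Rightarrow> real^'n \<Rightarrow> 'n set" where
  "Neps T G \<epsilon> u = {i. fq T G i u - lam T G u < \<epsilon>}"

text \<open>Gram matrix Gamma_M(u) = A_M(u)^T A_M(u), with rows/columns indexed by the elements of M
  (in increasing order in the paper; the ordering is immaterial here).\<close>
definition Gam :: "(real^'n \<Rightarrow> real^'n) \<Rightarrow> (real^'n \<Rightarrow> real^'n) \<Rightarrow> 'n set \<Rightarrow> real^'n \<Rightarrow> 'n \<Rightarrow> 'n \<Rightarrow> real" where
  "Gam T G M u i j = grad (fq T G i) u \<bullet> grad (fq T G j) u"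

definition solves_system :: "(real^'n \<Rightarrow> real^'n) \<Rightarrow> (real^'n \<Rightarrow> real^'n) \<Rightarrow> 'n set \<Rightarrow> real^'n
    \<Rightarrow> ('n \<Rightarrow> real) \<Rightarrow> real \<Rightarrow> bool" where
  "solves_system T G M u \<alpha> d \<longleftrightarrow>
     (\<forall>i\<in>M. (\<Sum>j\<in>M. Gam T G M u i j * \<alpha> j) = d) \<and> (\<Sum>j\<in>M. \<alpha> j) = 1"

end

theory Submission
  imports Defs
begin

text \<open>At a point of S every G_i is positive, so every f_i = T_i/G_i is differentiable there.
  If the system of Algorithm 2 has a solution with \<delta> > 0, then Y is a common ascent direction:
  Y \<bullet> \<nabla>f_i = \<delta> for all i \<in> N_\<epsilon>, and Y \<bullet> Y = \<delta> > 0. Along y = Y/|Y| each nearly active f_i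
  therefore increases strictly for small steps, while every other f_i starts above \<lambda> + \<epsilon> and stays
  above \<lambda> by continuity. Hence \<lambda> increases for all small positive steps, and the line-search
  maximizer can only do better.\<close>

lemma frechet_derivative_eq_grad_inner:
  fixes f :: "real^'n \<Rightarrow> real"
  assumes "f differentiable at x"
  shows "frechet_derivative f (at x) h = grad f x \<bullet> h"
proof -
  have lin: "linear (frechet_derivative f (at x))"
    using assms frechet_derivative_works has_derivative_linear by blast
  have "frechet_derivative f (at x) h = frechet_derivative f (at x) (\<Sum>i\<in>UNIV. h $ i *\<^sub>R axis i 1)"
    using basis_expansion[of h] by (simp add: scalar_mult_eq_scaleR)
  also have "\<dots> = (\<Sum>i\<in>UNIV. h $ i * frechet_derivative f (at x) (axis i 1))"
    using lin by (simp add: linear_sum linear_scale)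
  also have "\<dots> = grad f x \<bullet> h"
    by (simp add: grad_def inner_vec_def mult.commute)
  finally show ?thesis .
qed

lemma has_real_derivative_along_line:
  fixes f :: "real^'n \<Rightarrow> real"
  assumes "f differentiable at x"
  shows "((\<lambda>t. f (x + t *\<^sub>R y)) has_real_derivative (grad f x \<bullet> y)) (at 0)"
proof -
  have "(f has_derivative frechet_derivative f (at x)) (at x)"
    using assms frechet_derivative_works by blast
  then have df: "(f has_derivative frechet_derivative f (at x)) (at (x + 0 *\<^sub>R y))"
    by simp
  have line: "((\<lambda>t::real. x + t *\<^sub>R y) has_derivative (\<lambda>t. t *\<^sub>R y)) (at 0)"
    by (auto intro!: derivative_eq_intros)
  have "(\<lambda>t. frechet_derivative f (at x) (t *\<^sub>R y)) = (*) (grad f x \<bullet> y)"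
    using frechet_derivative_eq_grad_inner[OF assms] by auto
  then show ?thesis
    using diff_chain_at[OF line df] by (simp add: o_def has_field_derivative_def)
qed

lemma differentiable_fq:
  fixes T G :: "real^'n \<Rightarrow> real^'n"
  assumes "T differentiable at x" "G differentiable at x" "G x $ i \<noteq> 0"
  shows "fq T G i differentiable at x"
proof -
  have nth: "(\<lambda>v::real^'n. v $ i) differentiable at z" for z
    by (simp add: bounded_linear_imp_differentiable bounded_linear_vec_nth)
  have "(\<lambda>v. T v $ i) differentiable at x" "(\<lambda>v. G v $ i) differentiable at x"
    using differentiable_chain_at[OF assms(1) nth] differentiable_chain_at[OF assms(2) nth]
    by (simp_all add: o_def)
  then show ?thesis
    unfolding fq_def[abs_def] using differentiable_divide assms(3) by blast
qed

lemma lam_le_fq: "lam T G v \<le> fq T G i v"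
  unfolding lam_def by (intro Min_le) auto

lemma less_lam_iff: "c < lam T G v \<longleftrightarrow> (\<forall>i. c < fq T G i v)"
  unfolding lam_def by (subst Min_gr_iff) auto

lemma solves_system_ascent_direction:
  fixes T G :: "real^'n \<Rightarrow> real^'n" and M :: "'n set" and u :: "real^'n" and \<alpha> :: "'n \<Rightarrow> real"
  defines "Y \<equiv> \<Sum>j\<in>M. \<alpha> j *\<^sub>R grad (fq T G j) u"
  assumes "solves_system T G M u \<alpha> d" "d > 0" "i \<in> M"
  shows "grad (fq T G i) u \<bullet> (Y /\<^sub>R norm Y) > 0"
proof -
  have grad_Y: "grad (fq T G j) u \<bullet> Y = d" if "j \<in> M" for j
    using assms(2) that
    by (simp add: Y_def solves_system_def Gam_def inner_sum_right mult.commute)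
  have "Y \<bullet> Y = (\<Sum>j\<in>M. \<alpha> j * (grad (fq T G j) u \<bullet> Y))"
    unfolding Y_def by (simp add: inner_sum_left)
  also have "\<dots> = (\<Sum>j\<in>M. \<alpha> j) * d"
    by (simp add: grad_Y sum_distrib_right)
  finally have "Y \<bullet> Y = d"
    using assms(2) by (simp add: solves_system_def)
  then have "norm Y > 0"
    using \<open>d > 0\<close> by (metis inner_zero_left less_irrefl zero_less_norm_iff)
  then show ?thesis
    using grad_Y[OF \<open>i \<in> M\<close>] \<open>d > 0\<close> by (simp add: inner_scaleR_right)
qed

lemma eventually_gt_at_right_0:
  fixes f :: "real \<Rightarrow> real"
  assumes "(f has_real_derivative D) (at 0)" "c \<le> f 0" "0 < D \<or> c < f 0"
  shows "\<forall>\<^sub>F t in at_right 0. c < f t"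
  using assms(3)
proof
  assume "0 < D"
  then obtain e where "e > 0" "\<And>h. 0 < h \<Longrightarrow> h < e \<Longrightarrow> f 0 < f h"
    using DERIV_pos_inc_right[OF assms(1)] by auto
  then show ?thesis
    unfolding eventually_at_right_field using assms(2) by (auto intro: le_less_trans)
next
  assume "c < f 0"
  moreover have "(f \<longlongrightarrow> f 0) (at_right 0)"
    using DERIV_isCont[OF assms(1)] by (auto simp: isCont_def intro: tendsto_mono at_le)
  ultimately show ?thesis
    using order_tendstoD(1) by blast
qed

lemma eventually_lam_increases_along:
  fixes T G :: "real^'n \<Rightarrow> real^'n"
  assumes "\<epsilon> > 0" "\<And>i. fq T G i differentiable at x"
    and "\<And>i. i \<in> Neps T G \<epsilon> x \<Longrightarrow> grad (fq T G i) x \<bullet> y > 0"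
  shows "\<forall>\<^sub>F t in at_right 0. lam T G x < lam T G (x + t *\<^sub>R y)"
proof -
  have "\<forall>\<^sub>F t in at_right 0. lam T G x < fq T G i (x + t *\<^sub>R y)" for i
  proof (rule eventually_gt_at_right_0)
    show "((\<lambda>t. fq T G i (x + t *\<^sub>R y)) has_real_derivative grad (fq T G i) x \<bullet> y) (at 0)"
      using has_real_derivative_along_line[OF assms(2)] .
    show "lam T G x \<le> fq T G i (x + 0 *\<^sub>R y)"
      by (simp add: lam_le_fq)
    show "0 < grad (fq T G i) x \<bullet> y \<or> lam T G x < fq T G i (x + 0 *\<^sub>R y)"
      using assms(1) assms(3)[of i] by (cases "i \<in> Neps T G \<epsilon> x") (auto simp: Neps_def)
  qed
  then show ?thesis
    by (simp add: less_lam_iff eventually_all_finite)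
qed

lemma fq_differentiable_on_S:
  fixes T G :: "real^'n \<Rightarrow> real^'n"
  assumes "T differentiable at v" "G differentiable at v" "v \<in> S"
    and G_pos: "\<And>v \<psi>. v \<in> S \<Longrightarrow> (\<forall>i. \<psi> $ i \<ge> 0) \<Longrightarrow> \<psi> \<noteq> 0 \<Longrightarrow> G v \<bullet> \<psi> > 0"
  shows "fq T G i differentiable at v"
proof (rule differentiable_fq[OF assms(1,2)])
  have "\<forall>j. axis i (1::real) $ j \<ge> 0" "axis i (1::real) \<noteq> 0"
    by (simp add: axis_def, simp add: axis_eq_0_iff)
  then have "G v \<bullet> axis i 1 > 0"
    using G_pos[OF \<open>v \<in> S\<close>] by blast
  then show "G v $ i \<noteq> 0"
    by (simp add: inner_axis)
qed

theorem proposition3: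
  fixes T G :: "real^'n \<Rightarrow> real^'n"
    and T' G' :: "real^'n \<Rightarrow> ((real^'n) \<Rightarrow>\<^sub>L (real^'n))"
    and S :: "(real^'n) set"
    and \<epsilon> \<delta> :: real
    and u :: "nat \<Rightarrow> real^'n"
    and \<alpha> :: "nat \<Rightarrow> 'n \<Rightarrow> real"
    and d :: "nat \<Rightarrow> real"
    and \<tau> :: "nat \<Rightarrow> real"
    and k :: nat
  assumes T_C1: "\<And>x. (T has_derivative blinfun_apply (T' x)) (at x)" "continuous_on UNIV T'"
    and G_C1: "\<And>x. (G has_derivative blinfun_apply (G' x)) (at x)" "continuous_on UNIV G'"
    and S_open: "open S"
    and G_pos: "\<And>v \<psi>. v \<in> S \<Longrightarrow> (\<forall>i. \<psi> $ i \<ge> 0) \<Longrightarrow> \<psi> \<noteq> 0 \<Longrightarrow> G v \<bullet> \<psi> > 0"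
    and params: "\<epsilon> > 0" "\<delta> > 0"
    and start: "u 0 \<in> S"
    and system: "\<And>m. m \<le> k \<Longrightarrow> solves_system T G (Neps T G \<epsilon> (u m)) (u m) (\<alpha> m) (d m)"
    and no_stop: "\<And>m. m \<le> k \<Longrightarrow> \<not> (d m < \<delta> \<and> card (Neps T G \<epsilon> (u m)) = CARD('n))"
    and step: "\<And>m. m \<le> k \<Longrightarrow>
       (let Y = (\<Sum>j\<in>Neps T G \<epsilon> (u m). \<alpha> m j *\<^sub>R grad (fq T G j) (u m));
            y = Y /\<^sub>R norm Y
        in \<tau> m \<ge> 0 \<and> u m + \<tau> m *\<^sub>R y \<in> S
           \<and> (\<forall>t\<ge>0. u m + t *\<^sub>R y \<in> S \<longrightarrow> lam T G (u m + t *\<^sub>R y) \<le> lam T G (u m + \<tau> m *\<^sub>R y))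
           \<and> u (Suc m) = u m + \<tau> m *\<^sub>R y)"
    and pos: "d k > 0"
  shows "lam T G (u (Suc k)) > lam T G (u k)"
proof -
  define Y where "Y = (\<Sum>j\<in>Neps T G \<epsilon> (u k). \<alpha> k j *\<^sub>R grad (fq T G j) (u k))"
  define y where "y = Y /\<^sub>R norm Y"
  have iterates_in_S: "u m \<in> S" if "m \<le> k" for m
    using that by (induction m) (use start step in \<open>auto simp: Let_def\<close>)
  have line_search: "\<And>t. t \<ge> 0 \<Longrightarrow> u k + t *\<^sub>R y \<in> S \<Longrightarrow> lam T G (u k + t *\<^sub>R y) \<le> lam T G (u (Suc k))"
    using step[of k] by (auto simp: Let_def Y_def y_def)
  have "\<And>i. fq T G i differentiable at (u k)"
    using fq_differentiable_on_S T_C1(1) G_C1(1) iterates_in_S[of k] G_pos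
    by (meson differentiable_def order_refl)
  moreover have "\<And>i. i \<in> Neps T G \<epsilon> (u k) \<Longrightarrow> grad (fq T G i) (u k) \<bullet> y > 0"
    using solves_system_ascent_direction[OF system[of k] pos] by (simp add: Y_def y_def)
  ultimately have "\<forall>\<^sub>F t in at_right 0. lam T G (u k) < lam T G (u k + t *\<^sub>R y)"
    using eventually_lam_increases_along params(1) by blast
  moreover have "\<forall>\<^sub>F t in at_right 0. u k + t *\<^sub>R y \<in> S"
    using S_open iterates_in_S[of k]
    by (intro topological_tendstoD[where l="u k"]) (auto intro!: tendsto_eq_intros)
  ultimately have "\<forall>\<^sub>F t in at_right 0. 0 < t \<and> u k + t *\<^sub>R y \<in> S \<and> lam T G (u k) < lam T G (u k + t *\<^sub>R y)"
    by (auto intro: eventually_conj eventually_at_right_less)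
  then obtain t where "0 < t" "u k + t *\<^sub>R y \<in> S" "lam T G (u k) < lam T G (u k + t *\<^sub>R y)"
    using eventually_happens'[OF trivial_limit_at_right_real] by blast
  then show ?thesis
    using line_search[of t] by linarith
qed

end
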